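(* Let $k$ be an odd integer, $n\ge k\ge1$ and $1\le i^\circ\le n$. Then there exists an invertible linear map $S_{i^\circ}:M_{n\times k}(\mathbb F)\to M_{n\times k}(\mathbb F)$ such that: (S1) if $X\in M_{n\times k}(\mathbb F)$ and $\mathbf z\in\mathbb F^n$ satisfy $\mathbf z^tX=0$, then $(\mathbf z^\circ)^tS_{i^\circ}(X)=0$, where $\mathbf z^\circ=(\mathbf z_{i^\circ},\dots,\mathbf z_n,(-1)^{n+k+1}\mathbf z_1,\dots,(-1)^{n+k+1}\mathbf z_{i^\circ-1})^t$; (S2) $\det_{n,k}(X)=0$ implies $\det_{n,k}(S_{i^\circ}(X))=0$; (S3) for all $X\in M_{n\times k}(\mathbb F)$, if $\sum_{i=1}^n(-1)^i\big(S_{i^\circ}(X)\big)[i|)=0$ then $\sum_{i=1}^n(-1)^iX[i|)=0$.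
   Context: $X[i|)$ denotes the $i$-th row of $X$. Cullis' determinant: for $n\ge k$, $\det_{n,k}(X)=\sum_{c}\operatorname{sgn}(c)\det(X[c|))$, sum over $k$-subsets $c=\{c(1)<\dots<c(k)\}$ of $[n]$, $X[c|)$ the submatrix of rows in $c$, $\operatorname{sgn}(c)=(-1)^{\sum_{\alpha=1}^k(c(\alpha)-\alpha)}$. *)

theory Defs
  imports "Jordan_Normal_Form.Determinant" "Jordan_Normal_Form.DL_Submatrix"
begin

(* Matrices are JNF matrices, 0-indexed: row i (0-based) is row i+1 of the paper.
   A k-subset c of rows {0..<n}, with elements pick c 0 < ... < pick c (k-1).
   sgn(c) = (-1)^(sum_alpha (c(alpha) - alpha)); this quantity is invariant
   under the 0/1-index shift. *)
definition cullis_sgn :: "nat set \<Rightarrow> nat \<Rightarrow> 'a::comm_ring_1" where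
  "cullis_sgn c k = (-1) ^ (\<Sum>\<alpha><k. pick c \<alpha> - \<alpha>)"

definition cullis_det :: "nat \<Rightarrow> nat \<Rightarrow> 'a::comm_ring_1 mat \<Rightarrow> 'a" where
  "cullis_det n k X =
     (\<Sum>c\<in>{c. c \<subseteq> {..<n} \<and> card c = k}. cullis_sgn c k * det (submatrix X c {..<k}))"

definition zcirc :: "nat \<Rightarrow> nat \<Rightarrow> nat \<Rightarrow> 'a::comm_ring_1 vec \<Rightarrow> 'a vec" where
  "zcirc n k i0 z = vec n (\<lambda>j. if j + i0 - 1 < n then z $ (j + i0 - 1)
                              else (-1) ^ (n + k + 1) * z $ (j + i0 - 1 - n))"

end

theory Submission
  imports Defs
begin

text \<open>
  Take for \<open>S\<^sub>i\<^sub>\<degree>\<close> the \<open>(i\<degree> - 1)\<close>-th power of the twisted cyclic shift \<open>T\<close>,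
  which moves every row of \<open>X\<close> up by one and puts the first row, multiplied by
  \<open>s = (-1)^(n+k+1)\<close>, at the bottom. \<open>T\<close> is linear and invertible, and shifting \<open>z\<close>
  in the same way leaves \<open>z\<^sup>t X\<close> unchanged because \<open>s\<^sup>2 = 1\<close>; iterating the vector
  shift \<open>i\<degree> - 1\<close> times produces \<open>z\<degree>\<close>. For odd \<open>k\<close>, \<open>T\<close> negates the alternating
  row sum, and it negates the Cullis determinant: the minor of \<open>T X\<close> on the cyclic
  predecessor \<open>c'\<close> of a row set \<open>c\<close> equals the minor of \<open>X\<close> on \<open>c\<close>, up to a cyclic
  permutation of its \<open>k\<close> rows (an even one) and the factor \<open>s\<close> when the first row
  lies in \<open>c\<close>, while \<open>sgn c'\<close> differs from \<open>sgn c\<close> by exactly the opposite sign.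
\<close>

lemma pick_strict_mono_on:
  assumes mono: "strict_mono_on {..<k} f" and img: "f ` {..<k} = S" and i: "i < k"
  shows "pick S i = f i"
proof -
  have "{a \<in> S. a < f i} = f ` {..<i}"
    using img i strict_mono_on_less[OF mono] by auto
  moreover have "inj_on f {..<i}"
    by (rule inj_on_subset[OF strict_mono_on_imp_inj_on[OF mono]]) (use i in auto)
  ultimately have "card {a \<in> S. a < f i} = i"
    by (simp add: card_image)
  moreover have "f i \<in> S" using img i by blast
  ultimately show ?thesis using pick_card_in_set by metis
qed

lemma pick_lessThan: "j < k \<Longrightarrow> pick {..<k} j = j"
  using pick_strict_mono_on[of k id] by (simp add: strict_mono_on_def)

lemma pick_ge: assumes "i < card S" shows "i \<le> pick S i"
proof -
  have "{a\<in>S. a < pick S i} \<subseteq> {..<pick S i}" by auto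
  then have "card {a\<in>S. a < pick S i} \<le> pick S i"
    by (metis card_lessThan card_mono finite_lessThan)
  then show ?thesis using card_pick assms by simp
qed

lemma bij_betw_pick: assumes "finite S" "card S = k" shows "bij_betw (pick S) {..<k} S"
proof -
  have inj: "inj_on (pick S) {..<k}"
    unfolding inj_on_def using assms pick_mono
    by (metis lessThan_iff linorder_neqE_nat order_less_irrefl)
  have sub: "pick S ` {..<k} \<subseteq> S" using assms pick_in_set by auto
  have "card (pick S ` {..<k}) = card S" using card_image[OF inj] assms by simp
  then have "pick S ` {..<k} = S" using card_subset_eq[OF assms(1) sub] by simp
  then show ?thesis using inj unfolding bij_betw_def by simp
qed

lemma cullis_sgn_sum:
  assumes "finite c" "card c = k"
  shows "cullis_sgn c k = (-1::'a::comm_ring_1) ^ (\<Sum>c + (\<Sum>a<k. a))"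
proof -
  have "(\<Sum>a<k. pick c a - a) + (\<Sum>a<k. a) = (\<Sum>a<k. pick c a)"
    unfolding sum.distrib[symmetric] using pick_ge assms by (intro sum.cong) auto
  also have "\<dots> = \<Sum>c" using sum.reindex_bij_betw[OF bij_betw_pick[OF assms], of id] by simp
  finally have "\<Sum>c + (\<Sum>a<k. a) = (\<Sum>a<k. pick c a - a) + 2 * (\<Sum>a<k. a)" by simp
  then show ?thesis unfolding cullis_sgn_def by (simp only: power_add power_mult) simp
qed

lemma submatrix_eq_mat:
  assumes "X \<in> carrier_mat n k" "c \<subseteq> {..<n}" "card c = m"
  shows "submatrix X c {..<k} = mat m k (\<lambda>(i,j). X $$ (pick c i, j))"
proof -
  have "{i. i < dim_row X \<and> i \<in> c} = c" "{j. j < dim_col X \<and> j \<in> {..<k}} = {..<k}"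
    using assms by auto
  with assms show ?thesis
    unfolding submatrix_def by (intro eq_matI) (auto simp: pick_lessThan)
qed

definition cycle_succ :: "nat \<Rightarrow> nat \<Rightarrow> nat" where
  "cycle_succ k a = (if a < k then Suc a mod k else a)"

lemma cycle_succ_Suc:
  assumes "1 \<le> k" shows "cycle_succ (Suc k) = Transposition.transpose 0 k \<circ> cycle_succ k"
proof
  fix a
  consider "a < k - 1" | "a = k - 1" | "a \<ge> k" by linarith
  then show "cycle_succ (Suc k) a = (Transposition.transpose 0 k \<circ> cycle_succ k) a"
    by cases (use assms in \<open>auto simp: cycle_succ_def transpose_def\<close>)
qed

lemma cycle_succ_permutes: "cycle_succ k permutes {0..<k}"
proof (induction k)
  case 0
  have "cycle_succ 0 = id" by (auto simp: cycle_succ_def)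
  then show ?case unfolding atLeastLessThan0 by (metis permutes_id)
next
  case (Suc k)
  show ?case
  proof (cases "k = 0")
    case True
    have "cycle_succ 1 = id" by (auto simp: cycle_succ_def)
    then show ?thesis using True by (metis One_nat_def permutes_id)
  next
    case False
    then have "1 \<le> k" by simp
    have "cycle_succ k permutes {0..<Suc k}"
      using Suc.IH permutes_subset by fastforce
    then show ?thesis
      unfolding cycle_succ_Suc[OF \<open>1 \<le> k\<close>] by (intro permutes_compose permutes_swap_id) auto
  qed
qed

lemma sign_cycle_succ: "1 \<le> k \<Longrightarrow> sign (cycle_succ k) = (-1) ^ (k - 1)"
proof (induction k rule: nat_induct_at_least)
  case base
  have "cycle_succ 1 = id" by (auto simp: cycle_succ_def)
  then show ?case by simp
next
  case (Suc k)
  have "sign (cycle_succ (Suc k)) = sign (Transposition.transpose 0 k :: nat \<Rightarrow> nat) * sign (cycle_succ k)"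
    unfolding cycle_succ_Suc[OF Suc.hyps]
    using cycle_succ_permutes permutes_imp_permutation permutation_swap_id by (intro sign_compose) auto
  then show ?case using Suc by (cases k) (simp_all add: sign_swap_id)
qed

definition cycle_pred :: "nat \<Rightarrow> nat \<Rightarrow> nat" where
  "cycle_pred n x = (if x = 0 then n - 1 else x - 1)"

lemma cycle_pred_less: "x < n \<Longrightarrow> cycle_pred n x < n"
  by (auto simp: cycle_pred_def)

lemma inj_on_cycle_pred: "inj_on (cycle_pred n) {..<n}"
  unfolding inj_on_def cycle_pred_def by auto

lemma cycle_pred_image:
  assumes "c \<subseteq> {..<n}" "card c = k"
  shows "cycle_pred n ` c \<subseteq> {..<n}" "card (cycle_pred n ` c) = k"
  using assms cycle_pred_less card_image[OF inj_on_subset[OF inj_on_cycle_pred assms(1)]] by auto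

lemma pick_cycle_pred_image_notin:
  assumes c: "c \<subseteq> {..<n}" "card c = k" "0 \<notin> c" and a: "a < k"
  shows "pick (cycle_pred n ` c) a = cycle_pred n (pick c a)"
proof -
  have fin: "finite c" using c finite_subset by auto
  have val: "cycle_pred n (pick c b) = pick c b - 1" if "b < k" for b
    using pick_in_set[of b c] c that by (auto simp: cycle_pred_def)
  have pos: "0 < pick c b" if "b < k" for b
    using pick_in_set[of b c] c that by (metis gr0I)
  have mono: "strict_mono_on {..<k} (\<lambda>b. cycle_pred n (pick c b))"
  proof (intro strict_mono_onI)
    fix a b assume "a \<in> {..<k}" "b \<in> {..<k}" "a < b"
    then show "cycle_pred n (pick c a) < cycle_pred n (pick c b)"
      using val[of a] val[of b] pos[of a] pick_mono[of b c a] c(2) by simp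
  qed
  have "pick c ` {..<k} = c"
    using bij_betw_imp_surj_on[OF bij_betw_pick[OF fin c(2)]] .
  then have "(\<lambda>b. cycle_pred n (pick c b)) ` {..<k} = cycle_pred n ` c"
    by (simp add: image_image[symmetric])
  from pick_strict_mono_on[OF mono this a] show ?thesis by simp
qed

lemma pick_cycle_pred_image_in:
  assumes c: "c \<subseteq> {..<n}" "card c = k" "0 \<in> c" and a: "a < k"
  shows "pick (cycle_pred n ` c) a = cycle_pred n (pick c (cycle_succ k a))"
proof -
  have fin: "finite c" using c finite_subset by auto
  have pick_less: "pick c b < n" if "b < k" for b
    using pick_in_set[of b c] c that by auto
  have pick_pos: "0 < pick c (Suc b)" if "Suc b < k" for b
  proof -
    have "pick c 0 < pick c (Suc b)" using pick_mono[of "Suc b" c 0] c(2) that by simp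
    then show ?thesis by simp
  qed
  have val: "cycle_pred n (pick c (cycle_succ k b)) = (if Suc b = k then n - 1 else pick c (Suc b) - 1)"
    if "b < k" for b
  proof (cases "Suc b = k")
    case True
    then have "cycle_succ k b = 0" by (simp add: cycle_succ_def)
    moreover have "pick c 0 = 0" using c(3) by simp
    ultimately show ?thesis using True by (simp add: cycle_pred_def)
  next
    case False
    then have "cycle_succ k b = Suc b" using that by (simp add: cycle_succ_def)
    then show ?thesis using False pick_pos[of b] that by (simp add: cycle_pred_def)
  qed
  have mono: "strict_mono_on {..<k} (\<lambda>b. cycle_pred n (pick c (cycle_succ k b)))"
  proof (intro strict_mono_onI)
    fix a b assume "a \<in> {..<k}" "b \<in> {..<k}" "a < b"
    then have ab: "a < b" "a < k" "b < k" by auto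
    have "0 < pick c (Suc a)" using ab by (intro pick_pos) simp
    moreover have "pick c (Suc a) < n" using ab by (intro pick_less) simp
    moreover have "pick c (Suc a) < pick c (Suc b)" if "Suc b < k"
      using pick_mono[of "Suc b" c "Suc a"] that ab c(2) by simp
    ultimately show "cycle_pred n (pick c (cycle_succ k a)) < cycle_pred n (pick c (cycle_succ k b))"
      unfolding val[OF \<open>a < k\<close>] val[OF \<open>b < k\<close>] using ab by (auto simp del: pick.simps)
  qed
  have "cycle_succ k ` {..<k} = {..<k}"
    using permutes_image[OF cycle_succ_permutes] by (simp add: atLeast0LessThan)
  moreover have "pick c ` {..<k} = c"
    using bij_betw_imp_surj_on[OF bij_betw_pick[OF fin c(2)]] .
  moreover have "(\<lambda>b. cycle_pred n (pick c (cycle_succ k b))) ` {..<k}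
      = cycle_pred n ` pick c ` cycle_succ k ` {..<k}"
    by (simp only: image_image)
  ultimately have "(\<lambda>b. cycle_pred n (pick c (cycle_succ k b))) ` {..<k} = cycle_pred n ` c"
    by simp
  from pick_strict_mono_on[OF mono this a] show ?thesis by simp
qed

lemma sum_cycle_pred_image:
  assumes "c \<subseteq> {..<n}"
  shows "\<Sum>(cycle_pred n ` c) + card c = \<Sum>c + (if 0 \<in> c then n else 0)"
proof -
  have "\<Sum>(cycle_pred n ` c) = (\<Sum>x\<in>c. cycle_pred n x)"
    using sum.reindex[OF inj_on_subset[OF inj_on_cycle_pred assms], of "\<lambda>x. x"] by simp
  then have "\<Sum>(cycle_pred n ` c) + card c = (\<Sum>x\<in>c. cycle_pred n x + 1)"
    by (simp add: sum_Suc)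
  also have "\<dots> = (\<Sum>x\<in>c. x + (if x = 0 then n else 0))"
    by (rule sum.cong) (use assms in \<open>auto simp: cycle_pred_def\<close>)
  also have "\<dots> = \<Sum>c + (if 0 \<in> c then n else 0)"
    using finite_subset[OF assms] by (simp add: sum.distrib)
  finally show ?thesis .
qed

section \<open>The twisted cyclic row shift\<close>

definition shift_rows :: "nat \<Rightarrow> nat \<Rightarrow> 'a::comm_ring_1 mat \<Rightarrow> 'a mat" where
  "shift_rows n k X =
     mat n k (\<lambda>(i,j). if i < n - 1 then X $$ (Suc i, j) else (-1)^(n+k+1) * X $$ (0, j))"

lemma shift_rows_carrier: "shift_rows n k X \<in> carrier_mat n k"
  by (simp add: shift_rows_def)

lemma shift_rows_index:
  "i < n - 1 \<Longrightarrow> j < k \<Longrightarrow> shift_rows n k X $$ (i, j) = X $$ (Suc i, j)"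
  "Suc i = n \<Longrightarrow> j < k \<Longrightarrow> shift_rows n k X $$ (i, j) = (-1)^(n+k+1) * X $$ (0, j)"
  by (simp add: shift_rows_def) (drule sym, simp add: shift_rows_def)

lemma shift_rows_add:
  assumes "X \<in> carrier_mat n k" "Y \<in> carrier_mat n k"
  shows "shift_rows n k (X + Y) = shift_rows n k X + shift_rows n k Y"
  by (rule eq_matI) (use assms in \<open>auto simp: shift_rows_def algebra_simps\<close>)

lemma shift_rows_smult:
  assumes "X \<in> carrier_mat n k"
  shows "shift_rows n k (a \<cdot>\<^sub>m X) = a \<cdot>\<^sub>m shift_rows n k X"
  by (rule eq_matI) (use assms in \<open>auto simp: shift_rows_def algebra_simps\<close>)

lemma neg_one_power_square: "(-1::'a::comm_ring_1) ^ p * (-1) ^ p = 1"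
  by (simp flip: power_mult_distrib)

definition unshift_rows :: "nat \<Rightarrow> nat \<Rightarrow> 'a::comm_ring_1 mat \<Rightarrow> 'a mat" where
  "unshift_rows n k Y =
     mat n k (\<lambda>(i,j). if i = 0 then (-1)^(n+k+1) * Y $$ (n - 1, j) else Y $$ (i - 1, j))"

lemma unshift_rows_carrier: "unshift_rows n k Y \<in> carrier_mat n k"
  by (simp add: unshift_rows_def)

lemma unshift_shift_rows: "X \<in> carrier_mat n k \<Longrightarrow> unshift_rows n k (shift_rows n k X) = X"
  by (rule eq_matI)
     (auto simp: shift_rows_def unshift_rows_def mult.assoc[symmetric] neg_one_power_square)

lemma shift_unshift_rows: "Y \<in> carrier_mat n k \<Longrightarrow> shift_rows n k (unshift_rows n k Y) = Y"
proof (rule eq_matI)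
  fix i j assume "Y \<in> carrier_mat n k" "i < dim_row Y" "j < dim_col Y"
  then show "shift_rows n k (unshift_rows n k Y) $$ (i, j) = Y $$ (i, j)"
    by (cases "i = n - 1")
       (auto simp: shift_rows_def unshift_rows_def mult.assoc[symmetric] neg_one_power_square)
qed (auto simp: shift_rows_def)

lemma bij_betw_shift_rows: "bij_betw (shift_rows n k) (carrier_mat n k) (carrier_mat n k)"
  by (rule bij_betw_byWitness[of _ "unshift_rows n k"])
     (auto simp: unshift_shift_rows shift_unshift_rows shift_rows_carrier unshift_rows_carrier)

definition shift_vec :: "nat \<Rightarrow> nat \<Rightarrow> 'a::comm_ring_1 vec \<Rightarrow> 'a vec" where
  "shift_vec n k z = vec n (\<lambda>i. if i < n - 1 then z $ Suc i else (-1)^(n+k+1) * z $ 0)"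

lemma shift_vec_index:
  "i < n - 1 \<Longrightarrow> shift_vec n k z $ i = z $ Suc i"
  "Suc i = n \<Longrightarrow> shift_vec n k z $ i = (-1)^(n+k+1) * z $ 0"
  by (simp add: shift_vec_def) (drule sym, simp add: shift_vec_def)

lemma transpose_mult_vec_index:
  assumes "A \<in> carrier_mat n k" "v \<in> carrier_vec n" "j < k"
  shows "(transpose_mat A *\<^sub>v v) $ j = (\<Sum>i<n. A $$ (i, j) * v $ i)"
  using assms by (simp add: mult_mat_vec_def scalar_prod_def atLeast0LessThan)

lemma sum_lessThan_split_last: "0 < (n::nat) \<Longrightarrow> (\<Sum>i<n. f i) = (\<Sum>i<n - 1. f i) + f (n - 1)"
  by (cases n) simp_all

lemma transpose_shift_rows_mult_shift_vec:
  assumes X: "X \<in> carrier_mat n k" and z: "z \<in> carrier_vec n" and n: "0 < n"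
  shows "transpose_mat (shift_rows n k X) *\<^sub>v shift_vec n k z = transpose_mat X *\<^sub>v z"
proof (rule eq_vecI)
  fix j assume "j < dim_vec (transpose_mat X *\<^sub>v z)"
  then have j: "j < k" using X by simp
  obtain m where m: "n = Suc m" using n by (cases n) auto
  have "shift_vec n k z \<in> carrier_vec n" by (simp add: shift_vec_def)
  then have "(transpose_mat (shift_rows n k X) *\<^sub>v shift_vec n k z) $ j
      = (\<Sum>i<n. shift_rows n k X $$ (i, j) * shift_vec n k z $ i)"
    by (rule transpose_mult_vec_index[OF shift_rows_carrier _ j])
  also have "\<dots> = (\<Sum>i<n - 1. shift_rows n k X $$ (i, j) * shift_vec n k z $ i)
        + shift_rows n k X $$ (n - 1, j) * shift_vec n k z $ (n - 1)"
    by (rule sum_lessThan_split_last[OF n])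
  also have "\<dots> = (\<Sum>i<n - 1. X $$ (Suc i, j) * z $ Suc i)
      + ((-1)^(n+k+1) * (-1)^(n+k+1)) * (X $$ (0, j) * z $ 0)"
    using j n by (simp add: shift_rows_index shift_vec_index mult_ac)
  also have "\<dots> = (\<Sum>i<n. X $$ (i, j) * z $ i)"
    unfolding neg_one_power_square mult_1 m sum.lessThan_Suc_shift by (simp add: add.commute)
  also have "\<dots> = (transpose_mat X *\<^sub>v z) $ j"
    by (rule transpose_mult_vec_index[OF X z j, symmetric])
  finally show "(transpose_mat (shift_rows n k X) *\<^sub>v shift_vec n k z) $ j = (transpose_mat X *\<^sub>v z) $ j" .
qed (use X in \<open>simp add: shift_rows_def\<close>)

lemma alternating_sum_shift_rows:
  assumes X: "X \<in> carrier_mat n k" and n: "0 < n" and k: "odd k" and j: "j < k"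
  shows "(\<Sum>i<n. (-1) ^ Suc i * shift_rows n k X $$ (i, j)) = - (\<Sum>i<n. (-1) ^ Suc i * X $$ (i, j))"
proof -
  obtain m where m: "n = Suc m" using n by (cases n) auto
  have "(\<Sum>i<n. (-1) ^ Suc i * shift_rows n k X $$ (i, j))
      = (\<Sum>i<n - 1. (-1) ^ Suc i * shift_rows n k X $$ (i, j))
        + (-1) ^ Suc (n - 1) * shift_rows n k X $$ (n - 1, j)"
    by (rule sum_lessThan_split_last[OF n])
  also have "\<dots> = (\<Sum>i<n - 1. (-1) ^ Suc i * X $$ (Suc i, j))
      + ((-1) ^ Suc (n - 1) * (-1)^(n+k+1)) * X $$ (0, j)"
    using j n by (simp add: shift_rows_index mult.assoc)
  also have "(-1::'a) ^ Suc (n - 1) * (-1)^(n+k+1) = 1"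
    using k n by (simp add: minus_one_power_iff)
  also have "(\<Sum>i<n - 1. (-1) ^ Suc i * X $$ (Suc i, j)) + 1 * X $$ (0, j)
      = - (\<Sum>i<n. (-1) ^ Suc i * X $$ (i, j))"
    unfolding m sum.lessThan_Suc_shift by (simp add: sum_negf)
  finally show ?thesis .
qed

lemma funpow_shift_vec:
  assumes z: "z \<in> carrier_vec n" and m: "m < n"
  shows "(shift_vec n k ^^ m) z = zcirc n k (Suc m) z"
  using m
proof (induction m)
  case 0
  show ?case by (rule eq_vecI) (use z in \<open>auto simp: zcirc_def\<close>)
next
  case (Suc m)
  then have IH: "(shift_vec n k ^^ m) z = zcirc n k (Suc m) z" by simp
  show ?case unfolding funpow.simps o_def IH
  proof (rule eq_vecI)
    fix j assume "j < dim_vec (zcirc n k (Suc (Suc m)) z)"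
    then show "shift_vec n k (zcirc n k (Suc m) z) $ j = zcirc n k (Suc (Suc m)) z $ j"
      using Suc.prems by (cases "j = n - 1") (auto simp: shift_vec_def zcirc_def)
  qed (simp add: shift_vec_def zcirc_def)
qed

section \<open>The Cullis determinant changes sign under the shift\<close>

lemma shift_rows_cycle_pred:
  assumes "X \<in> carrier_mat n k" "x < n" "j < k"
  shows "shift_rows n k X $$ (cycle_pred n x, j) = (if x = 0 then (-1)^(n+k+1) else 1) * X $$ (x, j)"
  using assms cycle_pred_less[OF assms(2)] by (auto simp: shift_rows_def cycle_pred_def)

lemma submatrix_shift_rows_notin:
  assumes X: "X \<in> carrier_mat n k" and c: "c \<subseteq> {..<n}" "card c = m" "0 \<notin> c"
  shows "submatrix (shift_rows n k X) (cycle_pred n ` c) {..<k} = submatrix X c {..<k}"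
proof -
  have "submatrix (shift_rows n k X) (cycle_pred n ` c) {..<k}
      = mat m k (\<lambda>(i,j). shift_rows n k X $$ (pick (cycle_pred n ` c) i, j))"
    using cycle_pred_image[OF c(1,2)] shift_rows_carrier by (rule submatrix_eq_mat[rotated])
  also have "\<dots> = mat m k (\<lambda>(i,j). X $$ (pick c i, j))" (is "?L = ?R")
  proof (intro eq_matI)
    fix i j assume "i < dim_row ?R" "j < dim_col ?R"
    then have i: "i < m" and j: "j < k" by auto
    have pc: "pick c i \<in> c" using pick_in_set[of i c] i c(2) by simp
    then have "pick c i < n" using c(1) by auto
    moreover have "pick c i \<noteq> 0"
      using pc c(3) by (intro notI) simp
    ultimately show "?L $$ (i, j) = ?R $$ (i, j)"
      using i j pick_cycle_pred_image_notin[OF c(1,2,3) i] shift_rows_cycle_pred[OF X _ j]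
      by auto
  qed auto
  also have "\<dots> = submatrix X c {..<k}" using submatrix_eq_mat[OF X c(1,2)] by simp
  finally show ?thesis .
qed

lemma submatrix_shift_rows_in:
  assumes X: "X \<in> carrier_mat n k" and c: "c \<subseteq> {..<n}" "card c = k" "0 \<in> c"
  shows "submatrix (shift_rows n k X) (cycle_pred n ` c) {..<k}
       = mat k k (\<lambda>(i,j). multrow 0 ((-1)^(n+k+1)) (submatrix X c {..<k}) $$ (cycle_succ k i, j))"
proof -
  have "submatrix (shift_rows n k X) (cycle_pred n ` c) {..<k}
      = mat k k (\<lambda>(i,j). shift_rows n k X $$ (pick (cycle_pred n ` c) i, j))"
    using cycle_pred_image[OF c(1,2)] shift_rows_carrier by (rule submatrix_eq_mat[rotated])
  also have "\<dots> = mat k k (\<lambda>(i,j). multrow 0 ((-1)^(n+k+1)) (submatrix X c {..<k}) $$ (cycle_succ k i, j))"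
    (is "?L = ?R")
  proof (intro eq_matI)
    fix i j assume "i < dim_row ?R" "j < dim_col ?R"
    then have i: "i < k" and j: "j < k" by auto
    define b where "b = cycle_succ k i"
    have b: "b < k" using i by (simp add: b_def cycle_succ_def)
    have "pick c b \<in> c" using pick_in_set[of b c] b c(2) by simp
    moreover have "pick c b = 0 \<longleftrightarrow> b = 0"
      using pick_mono[of b c 0] b c by (cases b) auto
    ultimately show "?L $$ (i, j) = ?R $$ (i, j)"
      using i j b c pick_cycle_pred_image_in[OF c(1,2,3) i] shift_rows_cycle_pred[OF X _ j]
        submatrix_eq_mat[OF X c(1,2)]
      by (auto simp: b_def[symmetric] mat_multrow_def)
  qed auto
  finally show ?thesis .
qed

lemma det_submatrix_shift_rows_in:
  assumes X: "X \<in> carrier_mat n k" and c: "c \<subseteq> {..<n}" "card c = k" "0 \<in> c"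
  shows "det (submatrix (shift_rows n k X) (cycle_pred n ` c) {..<k})
       = (-1)^(k-1) * (-1)^(n+k+1) * det (submatrix X c {..<k})"
proof -
  define A where "A = submatrix X c {..<k}"
  define M where "M = multrow 0 ((-1)^(n+k+1)) A"
  have k: "1 \<le> k" using c by (metis One_nat_def card_gt_0_iff emptyE finite_subset finite_lessThan less_eq_Suc_le)
  have A: "A \<in> carrier_mat k k"
    using submatrix_eq_mat[OF X c(1,2)] by (simp add: A_def)
  then have M: "M \<in> carrier_mat k k" by (simp add: M_def)
  have "det (submatrix (shift_rows n k X) (cycle_pred n ` c) {..<k})
      = det (mat k k (\<lambda>(i,j). M $$ (cycle_succ k i, j)))"
    unfolding submatrix_shift_rows_in[OF assms] A_def M_def ..
  also have "\<dots> = signof (cycle_succ k) * det M"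
    by (rule det_permute_rows[OF M cycle_succ_permutes])
  also have "det M = (-1)^(n+k+1) * det A"
    unfolding M_def using k by (intro det_multrow[OF _ A]) simp
  finally show ?thesis by (simp add: sign_cycle_succ[OF k] A_def)
qed

lemma cullis_sgn_cycle_pred_image:
  assumes c: "c \<subseteq> {..<n}" "card c = k"
  shows "cullis_sgn (cycle_pred n ` c) k
       = (-1) ^ (k + (if 0 \<in> c then n else 0)) * (cullis_sgn c k :: 'a::comm_ring_1)"
proof -
  have fin: "finite c" using c finite_subset by auto
  have fin': "finite (cycle_pred n ` c)" using fin by simp
  define t where "t = (if 0 \<in> c then n else 0)"
  have "\<Sum>(cycle_pred n ` c) + k = \<Sum>c + t"
    using sum_cycle_pred_image[OF c(1)] c(2) by (simp add: t_def)
  moreover have "even (a + K) = even ((k + t) + (b + K))" if "a + k = b + t" for a b K :: nat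
    using that by presburger
  ultimately have "even (\<Sum>(cycle_pred n ` c) + (\<Sum>a<k. a)) = even ((k + t) + (\<Sum>c + (\<Sum>a<k. a)))"
    by blast
  then show ?thesis
    unfolding cullis_sgn_sum[OF fin c(2)] cullis_sgn_sum[OF fin' cycle_pred_image(2)[OF c]]
      power_add[symmetric] t_def
    by (simp only: minus_one_power_iff)
qed

lemma cullis_summand_shift_rows:
  fixes X :: "'a::comm_ring_1 mat"
  assumes X: "X \<in> carrier_mat n k" and c: "c \<subseteq> {..<n}" "card c = k" and k: "odd k"
  shows "cullis_sgn (cycle_pred n ` c) k * det (submatrix (shift_rows n k X) (cycle_pred n ` c) {..<k})
       = - (cullis_sgn c k * det (submatrix X c {..<k}))"
proof (cases "0 \<in> c")
  case True
  have "odd ((k + n) + ((k - 1) + (n + k + 1)))" using k by presburger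
  then have unit: "(-1::'a) ^ (k + n) * ((-1) ^ (k - 1) * (-1) ^ (n + k + 1)) = -1"
    by (simp only: power_add[symmetric] minus_one_power_iff) simp
  have "cullis_sgn (cycle_pred n ` c) k * det (submatrix (shift_rows n k X) (cycle_pred n ` c) {..<k})
    = ((-1) ^ (k + n) * ((-1) ^ (k - 1) * (-1) ^ (n + k + 1))) * (cullis_sgn c k * det (submatrix X c {..<k}))"
    unfolding cullis_sgn_cycle_pred_image[OF c] det_submatrix_shift_rows_in[OF X c True]
    using True by (simp only: if_True mult_ac)
  then show ?thesis unfolding unit by simp
next
  case False
  then show ?thesis
    unfolding cullis_sgn_cycle_pred_image[OF c] submatrix_shift_rows_notin[OF X c False]
    using k by simp
qed

lemma cullis_det_shift_rows:
  fixes X :: "'a::comm_ring_1 mat"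
  assumes X: "X \<in> carrier_mat n k" and k: "odd k"
  shows "cullis_det n k (shift_rows n k X) = - cullis_det n k X"
proof -
  define C where "C = {c. c \<subseteq> {..<n} \<and> card c = k}"
  have inj: "inj_on ((`) (cycle_pred n)) C"
    by (rule inj_on_image, rule inj_on_subset[OF inj_on_cycle_pred]) (auto simp: C_def)
  have "finite C"
    by (rule finite_subset[of _ "Pow {..<n}"]) (auto simp: C_def)
  moreover have "(`) (cycle_pred n) ` C \<subseteq> C"
    using cycle_pred_image unfolding C_def by blast
  ultimately have "(`) (cycle_pred n) ` C = C"
    using inj by (rule endo_inj_surj)
  define summand where "summand c = cullis_sgn c k * det (submatrix (shift_rows n k X) c {..<k})" for c
  have "cullis_det n k (shift_rows n k X) = sum summand C"
    unfolding cullis_det_def C_def summand_def ..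
  also have "\<dots> = sum summand ((`) (cycle_pred n) ` C)"
    unfolding \<open>(`) (cycle_pred n) ` C = C\<close> ..
  also have "\<dots> = (\<Sum>c\<in>C. summand (cycle_pred n ` c))"
    using sum.reindex[OF inj] by simp
  also have "\<dots> = (\<Sum>c\<in>C. - (cullis_sgn c k * det (submatrix X c {..<k})))"
    using cullis_summand_shift_rows[OF X _ _ k] by (intro sum.cong) (auto simp: C_def summand_def)
  also have "\<dots> = - cullis_det n k X"
    unfolding cullis_det_def C_def by (simp add: sum_negf)
  finally show ?thesis .
qed

lemma funpow_closed: "(\<And>x. x \<in> A \<Longrightarrow> f x \<in> A) \<Longrightarrow> x \<in> A \<Longrightarrow> (f ^^ m) x \<in> A"
  by (induction m) auto

lemma funpow_sign_flip:
  fixes \<phi> :: "'b \<Rightarrow> 'a::ring_1"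
  assumes "\<And>x. x \<in> A \<Longrightarrow> f x \<in> A" "\<And>x. x \<in> A \<Longrightarrow> \<phi> (f x) = - \<phi> x" "x \<in> A"
  shows "\<phi> ((f ^^ m) x) = (-1) ^ m * \<phi> x"
  by (induction m) (simp_all add: assms funpow_closed)

lemma funpow_shift_rows_carrier: "X \<in> carrier_mat n k \<Longrightarrow> (shift_rows n k ^^ m) X \<in> carrier_mat n k"
  using funpow_closed[of "carrier_mat n k" "shift_rows n k"] shift_rows_carrier by blast

lemma funpow_shift_rows_add:
  assumes "X \<in> carrier_mat n k" "Y \<in> carrier_mat n k"
  shows "(shift_rows n k ^^ m) (X + Y) = (shift_rows n k ^^ m) X + (shift_rows n k ^^ m) Y"
  by (induction m) (simp_all add: shift_rows_add funpow_shift_rows_carrier assms)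

lemma funpow_shift_rows_smult:
  assumes "X \<in> carrier_mat n k"
  shows "(shift_rows n k ^^ m) (a \<cdot>\<^sub>m X) = a \<cdot>\<^sub>m (shift_rows n k ^^ m) X"
  by (induction m) (simp_all add: shift_rows_smult funpow_shift_rows_carrier assms)

lemma transpose_funpow_shift_rows_mult:
  assumes X: "X \<in> carrier_mat n k" and z: "z \<in> carrier_vec n" and n: "0 < n"
  shows "transpose_mat ((shift_rows n k ^^ m) X) *\<^sub>v (shift_vec n k ^^ m) z = transpose_mat X *\<^sub>v z"
proof (induction m)
  case (Suc m)
  have "(shift_vec n k ^^ m) z \<in> carrier_vec n"
    using funpow_closed[of "carrier_vec n" "shift_vec n k"] z by (auto simp: shift_vec_def)
  then show ?case
    using Suc transpose_shift_rows_mult_shift_vec[OF funpow_shift_rows_carrier[OF X] _ n] by simp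
qed simp

theorem mainTheorem18:
  fixes n k i0 :: nat
  assumes "odd k" and "1 \<le> k" and "k \<le> n" and "1 \<le> i0" and "i0 \<le> n"
  shows "\<exists>S :: 'a::field mat \<Rightarrow> 'a mat.
     (\<forall>X \<in> carrier_mat n k. S X \<in> carrier_mat n k)
   \<and> (\<forall>X \<in> carrier_mat n k. \<forall>Y \<in> carrier_mat n k. S (X + Y) = S X + S Y)
   \<and> (\<forall>X \<in> carrier_mat n k. \<forall>a. S (a \<cdot>\<^sub>m X) = a \<cdot>\<^sub>m S X)
   \<and> bij_betw S (carrier_mat n k) (carrier_mat n k)
   \<and> (\<forall>X \<in> carrier_mat n k. \<forall>z \<in> carrier_vec n.
        transpose_mat X *\<^sub>v z = 0\<^sub>v k \<longrightarrow> transpose_mat (S X) *\<^sub>v zcirc n k i0 z = 0\<^sub>v k)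
   \<and> (\<forall>X \<in> carrier_mat n k. cullis_det n k X = 0 \<longrightarrow> cullis_det n k (S X) = 0)
   \<and> (\<forall>X \<in> carrier_mat n k.
        (\<forall>j<k. (\<Sum>i<n. (-1) ^ (Suc i) * S X $$ (i, j)) = 0) \<longrightarrow>
        (\<forall>j<k. (\<Sum>i<n. (-1) ^ (Suc i) * X $$ (i, j)) = 0))"
proof (intro exI[of _ "shift_rows n k ^^ (i0 - 1)"] conjI ballI allI impI)
  let ?S = "shift_rows n k ^^ (i0 - 1) :: 'a mat \<Rightarrow> 'a mat"
  have n: "0 < n" using assms by simp
  fix X :: "'a mat" assume X: "X \<in> carrier_mat n k"
  show "?S X \<in> carrier_mat n k" by (rule funpow_shift_rows_carrier[OF X])
  show "?S (X + Y) = ?S X + ?S Y" if "Y \<in> carrier_mat n k" for Y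
    by (rule funpow_shift_rows_add[OF X that])
  show "?S (a \<cdot>\<^sub>m X) = a \<cdot>\<^sub>m ?S X" for a
    by (rule funpow_shift_rows_smult[OF X])
  show "transpose_mat (?S X) *\<^sub>v zcirc n k i0 z = 0\<^sub>v k"
    if "z \<in> carrier_vec n" "transpose_mat X *\<^sub>v z = 0\<^sub>v k" for z
  proof -
    have "zcirc n k i0 z = (shift_vec n k ^^ (i0 - 1)) z"
      using funpow_shift_vec[OF that(1), of "i0 - 1" k] assms by simp
    then show ?thesis using transpose_funpow_shift_rows_mult[OF X that(1) n] that(2) by simp
  qed
  show "cullis_det n k (?S X) = 0" if "cullis_det n k X = 0"
    using funpow_sign_flip[of "carrier_mat n k" "shift_rows n k" "cullis_det n k",
        OF shift_rows_carrier cullis_det_shift_rows[OF _ assms(1)] X] that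
    by simp
  show "(\<Sum>i<n. (-1) ^ Suc i * X $$ (i, j)) = 0"
    if "\<forall>j<k. (\<Sum>i<n. (-1) ^ Suc i * ?S X $$ (i, j)) = 0" "j < k" for j
    using funpow_sign_flip[of "carrier_mat n k" "shift_rows n k" "\<lambda>Y. \<Sum>i<n. (-1) ^ Suc i * Y $$ (i, j)",
        OF shift_rows_carrier alternating_sum_shift_rows[OF _ n assms(1) that(2)] X]
      that(1)[rule_format, OF that(2)]
    by simp
next
  show "bij_betw (shift_rows n k ^^ (i0 - 1)) (carrier_mat n k) (carrier_mat n k)"
    by (rule bij_betw_funpow[OF bij_betw_shift_rows])
qed

end
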